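(* For each integer $k\ge 2$, the graph $\Theta(2,2,2k)$ is chromatic-choosable, but it is not weakly enumeratively chromatic-choosable.
   Context: $\Theta(l_1,l_2,l_3)$ denotes the graph consisting of two end vertices joined by three internally disjoint paths of lengths $l_1,l_2,l_3$. A graph $G$ is chromatic-choosable if its list chromatic number $\chi_\ell(G)$ equals its chromatic number $\chi(G)$. For a list assignment $L$, $P(G,L)$ is the number of proper $L$-colorings; an $m$-assignment assigns lists of size $m$ to every vertex; $P(G,m)$ is the chromatic polynomial and $P_\ell(G,m)$, the list color function, is the minimum of $P(G,L)$ over all $m$-assignments $L$. A graph $G$ is weakly enumeratively chromatic-choosable if $P_\ell(G,\chi(G))=P(G,\chi(G))$. *)

theory Defs
  imports "HOL-Library.FuncSet"
begin

text \<open>Finite simple graphs are given by a vertex set V and a set E of edges,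
each edge being a 2-element subset of V. Colours are natural numbers.\<close>

definition proper_coloring :: "'a set \<Rightarrow> 'a set set \<Rightarrow> ('a \<Rightarrow> nat) \<Rightarrow> bool" where
  "proper_coloring V E f \<longleftrightarrow> (\<forall>e\<in>E. \<forall>x\<in>e. \<forall>y\<in>e. x \<noteq> y \<longrightarrow> f x \<noteq> f y)"

definition chromatic_number :: "'a set \<Rightarrow> 'a set set \<Rightarrow> nat" where
  "chromatic_number V E = (LEAST m. \<exists>f. f ` V \<subseteq> {..<m} \<and> proper_coloring V E f)"

definition m_assignment :: "'a set \<Rightarrow> nat \<Rightarrow> ('a \<Rightarrow> nat set) \<Rightarrow> bool" where
  "m_assignment V m L \<longleftrightarrow> (\<forall>v\<in>V. finite (L v) \<and> card (L v) = m)"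

definition L_colorings :: "'a set \<Rightarrow> 'a set set \<Rightarrow> ('a \<Rightarrow> nat set) \<Rightarrow> ('a \<Rightarrow> nat) set" where
  "L_colorings V E L = {f \<in> PiE V L. proper_coloring V E f}"

definition P_list :: "'a set \<Rightarrow> 'a set set \<Rightarrow> ('a \<Rightarrow> nat set) \<Rightarrow> nat" where
  "P_list V E L = card (L_colorings V E L)"

definition choosable :: "'a set \<Rightarrow> 'a set set \<Rightarrow> nat \<Rightarrow> bool" where
  "choosable V E m \<longleftrightarrow> (\<forall>L. m_assignment V m L \<longrightarrow> L_colorings V E L \<noteq> {})"

definition list_chromatic_number :: "'a set \<Rightarrow> 'a set set \<Rightarrow> nat" where
  "list_chromatic_number V E = (LEAST m. choosable V E m)"

definition chrom_poly :: "'a set \<Rightarrow> 'a set set \<Rightarrow> nat \<Rightarrow> nat" where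
  "chrom_poly V E m = P_list V E (\<lambda>_. {..<m})"

definition list_color_function :: "'a set \<Rightarrow> 'a set set \<Rightarrow> nat \<Rightarrow> nat" where
  "list_color_function V E m = (LEAST p. \<exists>L. m_assignment V m L \<and> p = P_list V E L)"

definition chromatic_choosable :: "'a set \<Rightarrow> 'a set set \<Rightarrow> bool" where
  "chromatic_choosable V E \<longleftrightarrow> list_chromatic_number V E = chromatic_number V E"

definition weakly_enum_chromatic_choosable :: "'a set \<Rightarrow> 'a set set \<Rightarrow> bool" where
  "weakly_enum_chromatic_choosable V E \<longleftrightarrow>
     list_color_function V E (chromatic_number V E) = chrom_poly V E (chromatic_number V E)"

text \<open>Theta graphs. The end vertices are (0,0) and (0,1); the internal vertices of
the i-th path (i = 1,2,3) of length l are (i,1),...,(i,l-1).\<close>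
definition path_vx :: "nat \<Rightarrow> nat \<Rightarrow> nat \<Rightarrow> nat \<times> nat" where
  "path_vx l i j = (if j = 0 then (0,0) else if j = l then (0,1) else (i,j))"

definition path_verts :: "nat \<Rightarrow> nat \<Rightarrow> (nat \<times> nat) set" where
  "path_verts l i = {path_vx l i j | j. j \<le> l}"

definition path_edges :: "nat \<Rightarrow> nat \<Rightarrow> (nat \<times> nat) set set" where
  "path_edges l i = {{path_vx l i j, path_vx l i (Suc j)} | j. j < l}"

definition theta_V :: "nat \<Rightarrow> nat \<Rightarrow> nat \<Rightarrow> (nat \<times> nat) set" where
  "theta_V l1 l2 l3 = path_verts l1 1 \<union> path_verts l2 2 \<union> path_verts l3 3"

definition theta_E :: "nat \<Rightarrow> nat \<Rightarrow> nat \<Rightarrow> (nat \<times> nat) set set" where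
  "theta_E l1 l2 l3 = path_edges l1 1 \<union> path_edges l2 2 \<union> path_edges l3 3"

end

theory Submission
  imports Defs
begin

(*
  Write u = (0,0), w = (0,1), a = (1,1), b = (2,1), and u = q_0, q_1, ..., q_n = w for the
  long path, n = 2k. Colouring u, w by 0, a, b by 1 and q_j by the parity of j is proper, so
  the chromatic number is 2.

  Given lists of size 2, choose colours alpha at u and beta at w with L(a), L(b) not contained
  in {alpha, beta}, such that the path can be list-coloured from alpha at q_0 with q_(n-1)
  avoiding beta. For fixed alpha the path excludes at most one beta, namely when the colours
  reachable at q_(n-1) form a singleton; if this happens for both colours of u, all path lists
  equal L(u) and, n - 1 being odd, the colour excluded for each is the other one. A case count
  shows that one of the four pairs (alpha, beta) always survives.

  Swapping the two colours of a 2-colouring gives P(G,2) >= 2. Under the 2-assignment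
  rigid_lists, colour 0 is forced at u, and then every colour along the path and at a, b, w,
  so P_l(G,2) <= 1.
*)

section \<open>Colourings of general graphs\<close>

lemma proper_coloringD:
  assumes "proper_coloring V E f" "{x, y} \<in> E" "x \<noteq> y"
  shows "f x \<noteq> f y"
proof -
  have "\<forall>u\<in>{x, y}. \<forall>v\<in>{x, y}. u \<noteq> v \<longrightarrow> f u \<noteq> f v"
    using assms(1,2) unfolding proper_coloring_def by (rule bspec)
  then show ?thesis
    using assms(3) by simp
qed

lemma proper_coloring_restrict:
  assumes "\<Union>E \<subseteq> V"
  shows "proper_coloring V E (restrict f V) \<longleftrightarrow> proper_coloring V E f"
proof -
  have "restrict f V x = f x" if "x \<in> e" "e \<in> E" for x e
    using assms that by auto
  then show ?thesis
    unfolding proper_coloring_def by metis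
qed

lemma chromatic_number_eq_2I:
  assumes "f ` V \<subseteq> {..<2}" "proper_coloring V E f" "{x, y} \<in> E" "x \<noteq> y" "x \<in> V" "y \<in> V"
  shows "chromatic_number V E = 2"
  unfolding chromatic_number_def
proof (rule Least_equality)
  show "\<exists>f. f ` V \<subseteq> {..<2} \<and> proper_coloring V E f"
    using assms(1,2) by (intro exI[of _ f] conjI)
next
  fix m assume "\<exists>g. g ` V \<subseteq> {..<m} \<and> proper_coloring V E g"
  then obtain g where "g ` V \<subseteq> {..<m}" "proper_coloring V E g" by blast
  then have "g x < m" "g y < m" "g x \<noteq> g y"
    using assms(5,6) proper_coloringD[OF _ assms(3,4)] by auto
  then show "2 \<le> m" by linarith
qed

lemma chromatic_number_le_if_choosable:
  assumes "choosable V E m"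
  shows "chromatic_number V E \<le> m"
proof -
  have "m_assignment V m (\<lambda>_. {..<m})"
    by (simp add: m_assignment_def)
  then obtain f where "f \<in> PiE V (\<lambda>_. {..<m})" "proper_coloring V E f"
    using assms unfolding choosable_def L_colorings_def by blast
  then have "f ` V \<subseteq> {..<m} \<and> proper_coloring V E f"
    by auto
  then show ?thesis
    unfolding chromatic_number_def by (intro Least_le exI)
qed

lemma chromatic_choosableI:
  assumes "choosable V E (chromatic_number V E)"
  shows "chromatic_choosable V E"
  unfolding chromatic_choosable_def list_chromatic_number_def
  by (rule Least_equality) (use assms chromatic_number_le_if_choosable in auto)

lemma P_list_le_1I:
  assumes "\<And>f g x. f \<in> L_colorings V E L \<Longrightarrow> g \<in> L_colorings V E L \<Longrightarrow> x \<in> V \<Longrightarrow> f x = g x"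
  shows "P_list V E L \<le> 1"
proof -
  have "f = g" if "f \<in> L_colorings V E L" "g \<in> L_colorings V E L" for f g
  proof (rule extensionalityI)
    show "f \<in> extensional V" "g \<in> extensional V"
      using that unfolding L_colorings_def by (auto simp: PiE_def)
  qed (use assms that in blast)
  then show ?thesis
    unfolding P_list_def by (cases "finite (L_colorings V E L)") (auto simp: card_le_Suc0_iff_eq)
qed

lemma two_le_chrom_poly_2:
  assumes "finite V" "v \<in> V" "\<Union>E \<subseteq> V" "f ` V \<subseteq> {..<2}" "proper_coloring V E f"
  shows "2 \<le> chrom_poly V E 2"
proof -
  let ?C = "L_colorings V E (\<lambda>_. {..<2})"
  define g where "g x = 1 - f x" for x
  have "g x \<noteq> g y" if "x \<in> V" "y \<in> V" "f x \<noteq> f y" for x y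
  proof -
    have "f x < 2" "f y < 2"
      using assms(4) that(1,2) by auto
    then show ?thesis
      using that(3) unfolding g_def by linarith
  qed
  then have "proper_coloring V E g"
    using assms(3,5) unfolding proper_coloring_def by blast
  moreover have "g ` V \<subseteq> {..<2}"
    unfolding g_def by auto
  ultimately have "restrict f V \<in> ?C" "restrict g V \<in> ?C"
    using assms(4,5) unfolding L_colorings_def
    by (auto simp: restrict_PiE_iff proper_coloring_restrict[OF assms(3)])
  moreover have "restrict f V \<noteq> restrict g V"
  proof
    assume "restrict f V = restrict g V"
    then have "f v = 1 - f v"
      using assms(2) unfolding g_def by (metis restrict_apply')
    then show False by presburger
  qed
  moreover have "finite ?C"
  proof (rule finite_subset)
    show "?C \<subseteq> PiE V (\<lambda>_. {..<2})"
      unfolding L_colorings_def by blast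
    show "finite (PiE V (\<lambda>_. {..<2::nat}))"
      using assms(1) by (simp add: finite_PiE)
  qed
  ultimately have "card {restrict f V, restrict g V} \<le> card ?C"
    by (intro card_mono) simp_all
  then show ?thesis
    unfolding chrom_poly_def P_list_def using \<open>restrict f V \<noteq> restrict g V\<close> by simp
qed

lemma not_weakly_enum_chromatic_choosableI:
  assumes "m_assignment V (chromatic_number V E) L"
    and "P_list V E L < chrom_poly V E (chromatic_number V E)"
  shows "\<not> weakly_enum_chromatic_choosable V E"
proof -
  have "list_color_function V E (chromatic_number V E) \<le> P_list V E L"
    unfolding list_color_function_def by (rule Least_le) (use assms(1) in blast)
  then show ?thesis
    unfolding weakly_enum_chromatic_choosable_def using assms(2) by linarith
qed

section \<open>List colourings of paths\<close>

primrec path_reachable :: "(nat \<Rightarrow> 'c set) \<Rightarrow> 'c \<Rightarrow> nat \<Rightarrow> 'c set" where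
  "path_reachable Ls a 0 = {a}"
| "path_reachable Ls a (Suc j) = {c \<in> Ls (Suc j). \<exists>d\<in>path_reachable Ls a j. d \<noteq> c}"

lemma path_reachableE:
  assumes "c \<in> path_reachable Ls a j"
  obtains g where "g 0 = a" "g j = c" "\<forall>i\<in>{1..j}. g i \<in> Ls i" "\<forall>i<j. g i \<noteq> g (Suc i)"
  using assms
proof (induction j arbitrary: c thesis)
  case 0
  then have "c = a"
    by simp
  then show ?case
    by (intro "0.prems"(1)[of "\<lambda>_. a"]) auto
next
  case (Suc j)
  then obtain d where d: "d \<in> path_reachable Ls a j" "d \<noteq> c" "c \<in> Ls (Suc j)"
    by auto
  obtain g where g: "g 0 = a" "g j = d" "\<forall>i\<in>{1..j}. g i \<in> Ls i" "\<forall>i<j. g i \<noteq> g (Suc i)"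
    using Suc.IH[OF _ d(1)] by blast
  have "(g(Suc j := c)) 0 = a" "(g(Suc j := c)) (Suc j) = c"
    "\<forall>i\<in>{1..Suc j}. (g(Suc j := c)) i \<in> Ls i" "\<forall>i<Suc j. (g(Suc j := c)) i \<noteq> (g(Suc j := c)) (Suc i)"
    using g d by (auto simp: le_Suc_eq less_Suc_eq)
  then show ?case
    by (rule Suc.prems(1))
qed

lemma path_reachable_nonempty:
  assumes "\<forall>i\<in>{1..j}. card (Ls i) = 2"
  shows "path_reachable Ls a j \<noteq> {}"
  using assms
proof (induction j)
  case 0
  then show ?case by simp
next
  case (Suc j)
  then obtain d where d: "d \<in> path_reachable Ls a j"
    by auto
  obtain x y where "x \<noteq> y" "Ls (Suc j) = {x, y}"
    using Suc.prems card_2_iff[of "Ls (Suc j)"] by auto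
  then show ?case
    using d by (cases "d = x") auto
qed

lemma path_reachable_two_mono:
  assumes "\<forall>i\<in>{1..m}. card (Ls i) = 2" "j \<le> m"
    and "x \<in> path_reachable Ls a j" "y \<in> path_reachable Ls a j" "x \<noteq> y"
  shows "\<exists>x' y'. x' \<in> path_reachable Ls a m \<and> y' \<in> path_reachable Ls a m \<and> x' \<noteq> y'"
  using assms(2)
proof (induction m rule: dec_induct)
  case base
  then show ?case
    using assms(3-5) by blast
next
  case (step m)
  then obtain x' y' where "x' \<in> path_reachable Ls a m" "y' \<in> path_reachable Ls a m" "x' \<noteq> y'"
    by blast
  then have "\<exists>d\<in>path_reachable Ls a m. d \<noteq> c" for c
    by (cases "x' = c") auto
  then have "Ls (Suc m) \<subseteq> path_reachable Ls a (Suc m)"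
    by auto
  moreover obtain p q where "p \<noteq> q" "Ls (Suc m) = {p, q}"
    using assms(1) step.hyps(2) card_2_iff[of "Ls (Suc m)"] by auto
  ultimately show ?case
    by blast
qed

lemma path_reachable_singleton_mono:
  assumes "\<forall>i\<in>{1..m}. card (Ls i) = 2" "j \<le> m" "path_reachable Ls a m = {b}"
  shows "\<exists>x. path_reachable Ls a j = {x}"
proof -
  obtain x where x: "x \<in> path_reachable Ls a j"
    using path_reachable_nonempty[of j Ls a] assms(1,2) by auto
  have "y = x" if "y \<in> path_reachable Ls a j" for y
    using path_reachable_two_mono[OF assms(1,2) x that] assms(3) by auto
  then show ?thesis
    using x by blast
qed

(* If neither start colour leaves a choice at the end, every list Ls i equals {a1, a2} and the
   two reachable singletons alternate between a1 and a2. *)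
lemma path_reachable_singletons_swap:
  assumes two: "\<forall>i\<in>{1..m}. card (Ls i) = 2" and "a1 \<noteq> a2"
    and "path_reachable Ls a1 m = {b1}" "path_reachable Ls a2 m = {b2}" and "odd m"
  shows "b1 = a2 \<and> b2 = a1"
proof -
  have "path_reachable Ls a1 j = (if even j then {a1} else {a2}) \<and>
        path_reachable Ls a2 j = (if even j then {a2} else {a1})" if "j \<le> m" for j
    using that
  proof (induction j)
    case 0
    then show ?case by simp
  next
    case (Suc j)
    obtain x y where xy: "path_reachable Ls a1 j = {x}" "path_reachable Ls a2 j = {y}" "x \<noteq> y"
      using Suc \<open>a1 \<noteq> a2\<close> by (auto split: if_splits)
    obtain s t where "path_reachable Ls a1 (Suc j) = {s}" "path_reachable Ls a2 (Suc j) = {t}"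
      using path_reachable_singleton_mono[OF two Suc.prems] assms(3,4) by metis
    then have "Ls (Suc j) - {x} = {s}" "Ls (Suc j) - {y} = {t}"
      using xy by auto
    moreover obtain p q where "p \<noteq> q" "Ls (Suc j) = {p, q}"
      using two Suc.prems card_2_iff[of "Ls (Suc j)"] by auto
    ultimately have "Ls (Suc j) = {x, y}" "s = y" "t = x"
      using xy(3) by (auto simp: insert_Diff_if split: if_splits)
    then show ?case
      using Suc xy \<open>path_reachable Ls a1 (Suc j) = {s}\<close> \<open>path_reachable Ls a2 (Suc j) = {t}\<close>
      by (auto split: if_splits)
  qed
  then show ?thesis
    using assms(3-5) by auto
qed

lemma path_coloring_ending_at:
  assumes "\<forall>i\<in>{1..m}. card (Ls i) = 2" "path_reachable Ls a m \<noteq> {b}"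
  obtains g where "g 0 = a" "g (Suc m) = b" "\<forall>i\<in>{1..m}. g i \<in> Ls i" "\<forall>i\<le>m. g i \<noteq> g (Suc i)"
proof -
  obtain c where "c \<in> path_reachable Ls a m" "c \<noteq> b"
    using path_reachable_nonempty[OF assms(1)] assms(2) by blast
  then obtain g where "g 0 = a" "g m \<noteq> b" "\<forall>i\<in>{1..m}. g i \<in> Ls i" "\<forall>i<m. g i \<noteq> g (Suc i)"
    by (metis path_reachableE)
  then have "(g(Suc m := b)) 0 = a" "(g(Suc m := b)) (Suc m) = b" "\<forall>i\<in>{1..m}. (g(Suc m := b)) i \<in> Ls i"
    "\<forall>i\<le>m. (g(Suc m := b)) i \<noteq> (g(Suc m := b)) (Suc i)"
    by (auto simp: le_less)
  then show ?thesis
    by (rule that)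
qed

lemma alternating_path_coloring:
  fixes g :: "nat \<Rightarrow> nat"
  assumes "g 1 = 1" "\<forall>i\<in>{2..m}. g i \<in> {1, 2}" "\<forall>i<m. g i \<noteq> g (Suc i)" "j \<in> {1..m}"
  shows "g j = (if even j then 2 else 1)"
  using assms(4)
proof (induction j)
  case 0
  then show ?case by simp
next
  case (Suc j)
  show ?case
  proof (cases "j = 0")
    case False
    then have "g j = (if even j then 2 else 1)" "g (Suc j) \<in> {1, 2}" "g j \<noteq> g (Suc j)"
      using Suc assms(2) assms(3)[rule_format, of j] by auto
    then show ?thesis
      by auto
  qed (use assms(1) in simp)
qed

lemma forced_path_coloring:
  fixes g :: "nat \<Rightarrow> nat"
  assumes "n \<ge> 4" "even n" "g 0 = 0"
    and lists: "\<forall>j\<le>n. g j \<in> (if j \<le> 1 then {0, 1} else if n \<le> Suc j then {0, 2} else {1, 2})"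
    and proper: "\<forall>j<n. g j \<noteq> g (Suc j)"
    and "j \<le> n"
  shows "g j = (if j = 0 \<or> j = n - 1 then 0 else if j = n \<or> even j then 2 else 1)"
proof -
  have step: "g i \<noteq> g (Suc i)" if "i < n" for i
    using proper that by blast
  have "g 1 \<in> {0, 1}" "g n \<in> {0, 2}"
    using lists[rule_format, of 1] lists[rule_format, of n] assms(1) by simp_all
  have "\<not> n - 1 \<le> 1" "n \<le> Suc (n - 1)"
    using assms(1) by arith+
  then have "g (n-1) \<in> {0, 2}"
    using lists[rule_format, OF diff_le_self, of 1] by simp
  have "\<forall>i\<in>{2..n-2}. g i \<in> {1, 2}"
  proof
    fix i assume "i \<in> {2..n-2}"
    then have "i \<le> n" "\<not> i \<le> 1" "\<not> n \<le> Suc i"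
      by auto
    then show "g i \<in> {1, 2}"
      using lists[rule_format, of i] by simp
  qed
  have "g 1 = 1"
    using \<open>g 1 \<in> {0, 1}\<close> step[of 0] assms(1,3) by auto
  then have alternating: "g i = (if even i then 2 else 1)" if "i \<in> {1..n-2}" for i
    using alternating_path_coloring[of g "n-2" i] that \<open>\<forall>i\<in>{2..n-2}. g i \<in> {1, 2}\<close> proper by auto
  then have "g (n-2) = 2"
    using assms(1,2) by auto
  then have "g (n-1) = 0"
    using step[of "n-2"] \<open>g (n-1) \<in> {0, 2}\<close> assms(1) by (simp add: Suc_diff_Suc numeral_2_eq_2)
  then have "g n = 2"
    using step[of "n-1"] \<open>g n \<in> {0, 2}\<close> assms(1) by auto
  consider "j = 0" | "j = n - 1" | "j = n" | "j \<in> {1..n-2}"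
    using \<open>j \<le> n\<close> by fastforce
  then show ?thesis
    by cases (use alternating assms(3) \<open>g (n-1) = 0\<close> \<open>g n = 2\<close> assms(1) in auto)
qed

section \<open>The theta graph \<open>\<Theta>(2,2,n)\<close>\<close>

lemma path_verts_eq_image: "path_verts l i = path_vx l i ` {..l}"
  unfolding path_verts_def by auto

lemma finite_theta_V: "finite (theta_V l1 l2 l3)"
  unfolding theta_V_def path_verts_eq_image by simp

lemma path_edges_eq_image: "path_edges l i = (\<lambda>j. {path_vx l i j, path_vx l i (Suc j)}) ` {..<l}"
  unfolding path_edges_def by blast

lemma path_edges_subset_verts: "\<Union>(path_edges l i) \<subseteq> path_verts l i"
  unfolding path_edges_eq_image path_verts_eq_image by auto

lemma theta_E_subset_V: "\<Union>(theta_E l1 l2 l3) \<subseteq> theta_V l1 l2 l3"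
  using path_edges_subset_verts unfolding theta_E_def theta_V_def by blast

lemma path_vx_in_theta_V: "j \<le> l3 \<Longrightarrow> path_vx l3 3 j \<in> theta_V l1 l2 l3"
  unfolding theta_V_def path_verts_def by blast

lemma theta_edge: "{(0,0), (1,1)} \<in> theta_E 2 l2 l3"
proof -
  have "{path_vx 2 1 0, path_vx 2 1 (Suc 0)} \<in> path_edges 2 1"
    unfolding path_edges_def by (rule CollectI, rule exI[of _ 0]) simp
  then show ?thesis
    unfolding theta_E_def by (simp add: path_vx_def)
qed

lemma theta_V_2_2_iff:
  assumes "0 < n"
  shows "x \<in> theta_V 2 2 n \<longleftrightarrow> x = (1,1) \<or> x = (2,1) \<or> (\<exists>j\<le>n. x = path_vx n 3 j)"
proof -
  have "path_verts 2 i = {path_vx n 3 0, (i,1), path_vx n 3 n}" for i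
    using assms unfolding path_verts_eq_image by (auto simp: path_vx_def atMost_Suc)
  then show ?thesis
    unfolding theta_V_def path_verts_eq_image by auto
qed

lemma proper_coloring_theta_2_2_iff:
  "proper_coloring V (theta_E 2 2 n) f \<longleftrightarrow>
    f (0,0) \<noteq> f (1,1) \<and> f (1,1) \<noteq> f (0,1) \<and> f (0,0) \<noteq> f (2,1) \<and> f (2,1) \<noteq> f (0,1) \<and>
    (\<forall>j<n. f (path_vx n 3 j) \<noteq> f (path_vx n 3 (Suc j)))"
proof -
  have "{..<(2::nat)} = {0, Suc 0}" by auto
  moreover have "path_vx 2 i 0 = (0,0)" "path_vx 2 i (Suc 0) = (i,1)" "path_vx 2 i (Suc (Suc 0)) = (0,1)" for i
    by (simp_all add: path_vx_def)
  ultimately have E_eq: "theta_E 2 2 n = {{(0,0),(1,1)}, {(1,1),(0,1)}} \<union> {{(0,0),(2,1)}, {(2,1),(0,1)}} \<union>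
      (\<lambda>j. {path_vx n 3 j, path_vx n 3 (Suc j)}) ` {..<n}"
    unfolding theta_E_def path_edges_eq_image by simp
  have edge_iff: "(\<forall>x\<in>{p,q}. \<forall>y\<in>{p,q}. x \<noteq> y \<longrightarrow> f x \<noteq> f y) \<longleftrightarrow> (p \<noteq> q \<longrightarrow> f p \<noteq> f q)"
    for p q :: "nat \<times> nat"
    by auto
  have "j < n \<Longrightarrow> path_vx n 3 j \<noteq> path_vx n 3 (Suc j)" for j
    by (auto simp: path_vx_def)
  then show ?thesis
    unfolding E_eq proper_coloring_def ball_Un ball_simps edge_iff lessThan_iff by auto
qed

lemma theta_2_2_two_coloring:
  assumes "even n"
  obtains f where "f ` theta_V 2 2 n \<subseteq> {..<2}" "proper_coloring (theta_V 2 2 n) (theta_E 2 2 n) f"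
proof
  define f :: "nat \<times> nat \<Rightarrow> nat"
    where "f x = (if x = (1,1) \<or> x = (2,1) then 1 else if x = (0,1) then 0 else snd x mod 2)" for x
  show "f ` theta_V 2 2 n \<subseteq> {..<2}"
    unfolding f_def by auto
  have "f (path_vx n 3 j) = j mod 2" if "j \<le> n" for j
    using assms that by (auto simp: f_def path_vx_def)
  then have "f (path_vx n 3 j) \<noteq> f (path_vx n 3 (Suc j))" if "j < n" for j
    using that by (simp add: mod_Suc)
  then show "proper_coloring (theta_V 2 2 n) (theta_E 2 2 n) f"
    unfolding proper_coloring_theta_2_2_iff by (simp add: f_def)
qed

(* P, {a1, a2} and {b1, b2} each exclude at most one of the four pairs unless
   {u1, u2} = {w1, w2}; then a pair (u, u) survives, since the two sets never exclude it and
   swap rules out P u1 u1 and P u2 u2 together. *)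
lemma exists_pair_avoiding:
  assumes "u1 \<noteq> u2" "w1 \<noteq> w2" "a1 \<noteq> a2" "b1 \<noteq> b2"
    and functional: "\<And>x y z. P x y \<Longrightarrow> P x z \<Longrightarrow> y = z"
    and swap: "\<And>y z. P u1 y \<Longrightarrow> P u2 z \<Longrightarrow> y = u2 \<and> z = u1"
  shows "\<exists>\<alpha>\<in>{u1, u2}. \<exists>\<beta>\<in>{w1, w2}. \<not> P \<alpha> \<beta> \<and> \<not> {a1, a2} \<subseteq> {\<alpha>, \<beta>} \<and> \<not> {b1, b2} \<subseteq> {\<alpha>, \<beta>}"
  using functional[of u1 w1 w2] functional[of u2 w1 w2] swap[of w1 w1] swap[of w1 w2] swap[of w2 w1] swap[of w2 w2]
    assms(1-4)
  by (simp only: bex_simps insert_subset insert_iff empty_iff singleton_iff empty_subsetI simp_thms) (smt (verit))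

lemma theta_2_2_L_coloring_from_path:
  assumes "0 < n"
    and ends: "g 0 \<in> L (0,0)" "g n \<in> L (0,1)"
    and inner: "\<forall>j\<in>{1..n-1}. g j \<in> L (path_vx n 3 j)"
    and path_proper: "\<forall>j<n. g j \<noteq> g (Suc j)"
    and "ca \<in> L (1,1)" "ca \<notin> {g 0, g n}" and "cb \<in> L (2,1)" "cb \<notin> {g 0, g n}"
  shows "L_colorings (theta_V 2 2 n) (theta_E 2 2 n) L \<noteq> {}"
proof -
  let ?V = "theta_V 2 2 n"
  \<comment> \<open>on the path, \<open>snd x\<close> is the position of \<open>x\<close>, except at the end \<open>(0,1)\<close>\<close>
  define f :: "nat \<times> nat \<Rightarrow> nat"
    where "f x = (if x = (1,1) then ca else if x = (2,1) then cb else if x = (0,1) then g n else g (snd x))"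
    for x
  have f_path: "f (path_vx n 3 j) = g j" if "j \<le> n" for j
    using assms(1) that by (auto simp: f_def path_vx_def)
  have "f x \<in> L x" if "x \<in> ?V" for x
    using that unfolding theta_V_2_2_iff[OF assms(1)]
  proof (elim disjE exE conjE)
    fix j assume "j \<le> n" "x = path_vx n 3 j"
    then have "f x = g j"
      using f_path by simp
    moreover from \<open>j \<le> n\<close> consider "j = 0" | "j = n" | "j \<in> {1..n-1}"
      by fastforce
    then have "g j \<in> L (path_vx n 3 j)"
    proof cases
      case 1
      then show ?thesis using ends(1) by (simp add: path_vx_def)
    next
      case 2
      then show ?thesis using ends(2) assms(1) by (simp add: path_vx_def)
    next
      case 3
      then show ?thesis using inner by blast
    qed
    ultimately show ?thesis
      using \<open>x = path_vx n 3 j\<close> by simp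
  qed (use assms(6,8) in \<open>simp_all add: f_def\<close>)
  then have "restrict f ?V \<in> PiE ?V L"
    by (simp add: restrict_PiE_iff)
  moreover have "proper_coloring ?V (theta_E 2 2 n) f"
    unfolding proper_coloring_theta_2_2_iff
    using assms(7,9) path_proper f_path by (auto simp: f_def path_vx_def)
  ultimately show ?thesis
    unfolding L_colorings_def using proper_coloring_restrict[OF theta_E_subset_V] by blast
qed

lemma choosable_theta_2_2:
  assumes "n \<ge> 2" "even n"
  shows "choosable (theta_V 2 2 n) (theta_E 2 2 n) 2"
  unfolding choosable_def
proof (intro allI impI)
  fix L assume "m_assignment (theta_V 2 2 n) 2 L"
  then have card_L: "card (L x) = 2" if "x \<in> theta_V 2 2 n" for x
    using that unfolding m_assignment_def by blast
  have "(0,0) \<in> theta_V 2 2 n" "(0,1) \<in> theta_V 2 2 n" "(1,1) \<in> theta_V 2 2 n" "(2,1) \<in> theta_V 2 2 n"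
    using assms(1) theta_V_2_2_iff[of n] path_vx_in_theta_V[of 0 n 2 2] path_vx_in_theta_V[of n n 2 2]
    by (auto simp: path_vx_def)
  then obtain u1 u2 w1 w2 a1 a2 b1 b2 where
    "u1 \<noteq> u2" "L (0,0) = {u1, u2}" "w1 \<noteq> w2" "L (0,1) = {w1, w2}"
    "a1 \<noteq> a2" "L (1,1) = {a1, a2}" "b1 \<noteq> b2" "L (2,1) = {b1, b2}"
    using card_L card_2_iff by metis
  define Ls where "Ls j = L (path_vx n 3 j)" for j
  have "card (Ls i) = 2" if "i \<le> n" for i
    unfolding Ls_def using card_L path_vx_in_theta_V[OF that] .
  then have two: "\<forall>i\<in>{1..n-1}. card (Ls i) = 2"
    by auto
  define P where "P \<alpha> \<beta> \<longleftrightarrow> path_reachable Ls \<alpha> (n-1) = {\<beta>}" for \<alpha> \<beta>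
  have "\<exists>\<alpha>\<in>{u1, u2}. \<exists>\<beta>\<in>{w1, w2}. \<not> P \<alpha> \<beta> \<and> \<not> {a1, a2} \<subseteq> {\<alpha>, \<beta>} \<and> \<not> {b1, b2} \<subseteq> {\<alpha>, \<beta>}"
  proof (rule exists_pair_avoiding)
    show "\<And>x y z. P x y \<Longrightarrow> P x z \<Longrightarrow> y = z"
      unfolding P_def by simp
    show "\<And>y z. P u1 y \<Longrightarrow> P u2 z \<Longrightarrow> y = u2 \<and> z = u1"
      unfolding P_def using path_reachable_singletons_swap[OF two \<open>u1 \<noteq> u2\<close>] assms by auto
  qed fact+
  then obtain \<alpha> \<beta> where
    "\<alpha> \<in> L (0,0)" "\<beta> \<in> L (0,1)" "\<not> P \<alpha> \<beta>" "\<not> L (1,1) \<subseteq> {\<alpha>, \<beta>}" "\<not> L (2,1) \<subseteq> {\<alpha>, \<beta>}"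
    using \<open>L (0,0) = {u1, u2}\<close> \<open>L (0,1) = {w1, w2}\<close> \<open>L (1,1) = {a1, a2}\<close> \<open>L (2,1) = {b1, b2}\<close>
    by blast
  obtain g where "g 0 = \<alpha>" "g (Suc (n-1)) = \<beta>" and inner: "\<forall>i\<in>{1..n-1}. g i \<in> L (path_vx n 3 i)"
    and proper: "\<forall>i\<le>n-1. g i \<noteq> g (Suc i)"
    using path_coloring_ending_at[OF two] \<open>\<not> P \<alpha> \<beta>\<close> unfolding P_def Ls_def by blast
  moreover have "Suc (n-1) = n"
    using assms(1) by simp
  ultimately have ends: "g 0 = \<alpha>" "g n = \<beta>"
    by simp_all
  have "\<forall>j<n. g j \<noteq> g (Suc j)"
    using proper by auto
  moreover obtain ca cb where "ca \<in> L (1,1)" "ca \<notin> {\<alpha>, \<beta>}" "cb \<in> L (2,1)" "cb \<notin> {\<alpha>, \<beta>}"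
    using \<open>\<not> L (1,1) \<subseteq> {\<alpha>, \<beta>}\<close> \<open>\<not> L (2,1) \<subseteq> {\<alpha>, \<beta>}\<close> by blast
  ultimately show "L_colorings (theta_V 2 2 n) (theta_E 2 2 n) L \<noteq> {}"
    using theta_2_2_L_coloring_from_path[of n g L ca cb] assms(1) inner ends
      \<open>\<alpha> \<in> L (0,0)\<close> \<open>\<beta> \<in> L (0,1)\<close> by simp
qed

section \<open>A 2-assignment with a unique colouring\<close>

definition rigid_lists :: "nat \<Rightarrow> nat \<times> nat \<Rightarrow> nat set" where
  "rigid_lists n x =
    (if x \<in> {(0,0), (1,1), (3,1)} then {0, 1} else if x \<in> {(0,1), (3, n - 1)} then {0, 2} else {1, 2})"

lemma rigid_lists_path_vx:
  assumes "n \<ge> 4" "j \<le> n"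
  shows "rigid_lists n (path_vx n 3 j) = (if j \<le> 1 then {0, 1} else if n \<le> Suc j then {0, 2} else {1, 2})"
  using assms by (auto simp: rigid_lists_def path_vx_def)

lemma rigid_lists_coloring_forced:
  assumes "n \<ge> 4" "even n"
    and f: "f \<in> L_colorings (theta_V 2 2 n) (theta_E 2 2 n) (rigid_lists n)"
  shows "f (1,1) = 1 \<and> f (2,1) = 1 \<and>
    (\<forall>j\<le>n. f (path_vx n 3 j) = (if j = 0 \<or> j = n - 1 then 0 else if j = n \<or> even j then 2 else 1))"
proof -
  define g where "g j = f (path_vx n 3 j)" for j
  have lists: "f x \<in> rigid_lists n x" if "x \<in> theta_V 2 2 n" for x
    using f that unfolding L_colorings_def by auto
  have "f (1,1) \<in> {0, 1}" "f (2,1) \<in> {1, 2}"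
    using lists[of "(1,1)"] lists[of "(2,1)"] assms(1) theta_V_2_2_iff[of n]
    by (auto simp: rigid_lists_def)
  have g_lists: "\<forall>j\<le>n. g j \<in> (if j \<le> 1 then {0, 1} else if n \<le> Suc j then {0, 2} else {1, 2})"
    unfolding g_def using lists path_vx_in_theta_V rigid_lists_path_vx[OF assms(1)] by metis
  have "f (path_vx n 3 0) \<noteq> f (1,1)" "f (1,1) \<noteq> f (path_vx n 3 n)"
    "f (path_vx n 3 0) \<noteq> f (2,1)" "f (2,1) \<noteq> f (path_vx n 3 n)" and path_proper: "\<forall>j<n. g j \<noteq> g (Suc j)"
    using f assms(1) unfolding L_colorings_def proper_coloring_theta_2_2_iff g_def
    by (auto simp: path_vx_def)
  \<comment> \<open>colour 1 at \<open>(0,0)\<close> would force colour 2 at both \<open>(0,1)\<close> and \<open>(2,1)\<close>\<close>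
  then have "g 0 = 0" "f (1,1) = 1"
    using \<open>f (1,1) \<in> {0, 1}\<close> \<open>f (2,1) \<in> {1, 2}\<close> g_lists[rule_format, of 0] g_lists[rule_format, of n] assms(1)
    unfolding g_def by auto
  have path: "g j = (if j = 0 \<or> j = n - 1 then 0 else if j = n \<or> even j then 2 else 1)" if "j \<le> n" for j
    using forced_path_coloring[OF assms(1,2) \<open>g 0 = 0\<close> g_lists path_proper that] .
  then have "g n = 2"
    using assms(1) by simp
  then have "f (2,1) = 1"
    using \<open>f (2,1) \<in> {1, 2}\<close> \<open>f (2,1) \<noteq> f (path_vx n 3 n)\<close> unfolding g_def by auto
  then show ?thesis
    using \<open>f (1,1) = 1\<close> path unfolding g_def by blast
qed

lemma P_list_rigid_lists_le_1:
  assumes "n \<ge> 4" "even n"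
  shows "P_list (theta_V 2 2 n) (theta_E 2 2 n) (rigid_lists n) \<le> 1"
proof (rule P_list_le_1I)
  fix f g x
  assume f: "f \<in> L_colorings (theta_V 2 2 n) (theta_E 2 2 n) (rigid_lists n)"
    and g: "g \<in> L_colorings (theta_V 2 2 n) (theta_E 2 2 n) (rigid_lists n)"
    and "x \<in> theta_V 2 2 n"
  then have "x = (1,1) \<or> x = (2,1) \<or> (\<exists>j\<le>n. x = path_vx n 3 j)"
    using theta_V_2_2_iff[of n] assms(1) by simp
  then show "f x = g x"
    using rigid_lists_coloring_forced[OF assms f] rigid_lists_coloring_forced[OF assms g] by auto
qed

theorem lemma13:
  fixes k :: nat
  assumes "k \<ge> 2"
  shows "chromatic_choosable (theta_V 2 2 (2*k)) (theta_E 2 2 (2*k)) \<and>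
         \<not> weakly_enum_chromatic_choosable (theta_V 2 2 (2*k)) (theta_E 2 2 (2*k))"
proof -
  let ?V = "theta_V 2 2 (2*k)" and ?E = "theta_E 2 2 (2*k)"
  have n: "2*k \<ge> 4" "2*k \<ge> 2" "even (2*k)"
    using assms by auto
  obtain f where f: "f ` ?V \<subseteq> {..<2}" "proper_coloring ?V ?E f"
    using theta_2_2_two_coloring[OF n(3)] .
  have "(0,0) \<in> ?V" "(1,1) \<in> ?V"
    using path_vx_in_theta_V[of 0 "2*k" 2 2] theta_V_2_2_iff[of "2*k"] n by (auto simp: path_vx_def)
  then have chi: "chromatic_number ?V ?E = 2"
    using chromatic_number_eq_2I[OF f theta_edge] by simp
  have "chromatic_choosable ?V ?E"
    using choosable_theta_2_2[OF n(2,3)] chi by (simp add: chromatic_choosableI)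
  moreover have "P_list ?V ?E (rigid_lists (2*k)) < chrom_poly ?V ?E 2"
    using P_list_rigid_lists_le_1[OF n(1,3)]
      two_le_chrom_poly_2[OF finite_theta_V \<open>(0,0) \<in> ?V\<close> theta_E_subset_V f] by linarith
  moreover have "m_assignment ?V 2 (rigid_lists (2*k))"
    by (simp add: m_assignment_def rigid_lists_def)
  ultimately show ?thesis
    using not_weakly_enum_chromatic_choosableI[of ?V ?E "rigid_lists (2*k)"] chi by simp
qed

end
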